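(* A cubical iterated graph system is of bounded geometry.
   Context: Graphs: $(V,E)$, $V$ finite non-empty, $E\subseteq V\times V$, $(x,y)\in E\Rightarrow(y,x)\notin E$; $\{x,y\}\in E$ means either orientation; a path is a sequence $[x_1,\dots,x_k]$ ($k\ge1$) with $\{x_i,x_{i+1}\}\in E$, of length $k-1$; $d_G$ is the path metric. An iterated graph system (IGS) $\mathfrak R$ consists of a connected graph $G_1=(S,E)$, a finite set $\mathcal T$ of types, a surjective typing $\mathfrak t:E\to\mathcal T$ and non-empty gluing rules $I_t\subseteq S\times S$. With $W_m=S^m$, $W_\#=\bigcup_{m\ge1}W_m$, $[w]_k=w_1\cdots w_k$, the replacement graphs $G_m=(W_m,E_m)$ are defined recursively: $(w,v)\in E_{m+1}$ iff either (1) $[w]_m=[v]_m$ and $(w_{m+1},v_{m+1})\in E$ (type $\mathfrak t(w_{m+1},v_{m+1})$), or (2) $([w]_m,[v]_m)\in E_m$ and $(w_{m+1},v_{m+1})\in I_{\mathfrak t([w]_m,[v]_m)}$ (type $\mathfrak t([w]_m,[v]_m)$). For $n\ge k$, $\pi_{n,k}$ maps a path of $G_n$ to the path of $G_k$ obtained by replacing each vertex $w$ by $[w]_k$ and deleting consecutive repetitions. A path $\theta$ in $G_m$ is an intersection path if there are paths $\theta_n$ in $G_n$ ($n\in\mathbb N$) with $\theta_m=\theta$, $\pi_{n,k}(\theta_n)=\theta_k$ for $n>k$, and $\lim_n\operatorname{len}(\theta_n)<\infty$. $\mathcal N(w)=\{v\in W_{|w|}:$ there is an intersection path from $w$ to $v\}$;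 $\mathfrak R$ is of bounded geometry if $\sup_{w\in W_\#}\operatorname{diam}_{d_{G_{|w|}}}(\mathcal N(w))<\infty$. Mapping of IGS $\varphi:\mathfrak R\to\mathfrak R'$: a graph mapping $G_1\to G_1'$ (edges go to edges or are collapsed) such that (i) if $\varphi(w_1)=\varphi(v_1)$ for an edge $\{w_1,v_1\}$ of type $t$ then $\varphi(w_2)=\varphi(v_2)$ for all $(w_2,v_2)\in I_t$; (ii) if $(w_1,v_1)\in E$ has type $t$ and $(\varphi(w_1),\varphi(v_1))\in E'$ has type $t'$ then $(\varphi(w_2),\varphi(v_2))\in I'_{t'}$ for all $(w_2,v_2)\in I_t$; (iii) if $(w_1,v_1)\in E$ has type $t$ and $(\varphi(v_1),\varphi(w_1))\in E'$ has type $t'$ then $(\varphi(v_2),\varphi(w_2))\in I'_{t'}$ for all $(w_2,v_2)\in I_t$. An isomorphism of IGS is a graph isomorphism such that it and its inverse are mappings of IGS; $\mathfrak R\subseteq\mathfrak R'$ (sub-system) means $S\subseteq S'$, same types, inclusion is a mapping of IGS. Cubical IGS: for integers $d_*\ge1,s_*\ge1,L_*\ge3$, $\mathfrak R(d_*,L_*,s_* )$ has symbols $\{1,\dots,L_*\}^{d_*}\times\{\underline1,\dots,\underline{s_*}\}$ with coordinates $c_i$ and sheet $s$; types $t_1,\dots,t_{d_*}$; $(w,v)$ is an edge of type $t_j$ iff $c_i(v)=c_i(w)$ ($i\ne j$), $c_j(v)=c_j(w)+1$; $(w,v)\in I_{t_j}$ iff $c_i(w)=c_i(v)$ ($i\ne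 j$), $(c_j(w),c_j(v))=(L_*,1)$, $s(w)=s(v)$. Sheet- and other-coordinate-preserving maps: $\eta_j:c_j\mapsto L_*+1-c_j$; $\alpha^+_{j,k}$ ($j\ne k$) swaps $c_j,c_k$; $\alpha^-_{j,k}$: $c_k\mapsto L_*+1-c_j$, $c_j\mapsto L_*+1-c_k$; $\mathcal G$ is the set of these. A cubical IGS is a sub-system $\mathfrak R\subseteq\mathfrak R(d_*,L_*,s_* )$ with: (C1) for each $j$, every symbol with $c_i\in\{1,L_*\}$ for all $i\ne j$ and sheet $\underline1$ (condition $(\ast_j)$) is in $S(\mathfrak R)$; (C2) if $w,v$ satisfy $(\ast_j)$, agree in coordinates $i\ne j$, and $c_j(v)=c_j(w)+1$, then $(w,v)\in E(\mathfrak R)$; (C3) if $w,v$ satisfy $(\ast_j)$, agree in coordinates $i\ne j$, and $(c_j(w),c_j(v))=(L_*,1)$, then $(w,v)\in I_{t_j}(\mathfrak R)$; (C4) each $\alpha\in\mathcal G$ restricts to an isomorphism of IGS $\mathfrak R\to\mathfrak R$. *)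

theory Defs
  imports Main "HOL-Library.Extended_Nat"
begin

definition is_path :: "'v set \<Rightarrow> ('v \<times> 'v) set \<Rightarrow> 'v list \<Rightarrow> bool" where
  "is_path V E p \<longleftrightarrow> p \<noteq> [] \<and> set p \<subseteq> V \<and>
     (\<forall>i. Suc i < length p \<longrightarrow> (p ! i, p ! Suc i) \<in> E \<or> (p ! Suc i, p ! i) \<in> E)"

definition plen :: "'v list \<Rightarrow> nat" where
  "plen p = length p - 1"

text \<open>Path metric (with value \<infinity> if no path exists).\<close>
definition gdist :: "'v set \<Rightarrow> ('v \<times> 'v) set \<Rightarrow> 'v \<Rightarrow> 'v \<Rightarrow> enat" where
  "gdist V E x y = (INF p \<in> {p. is_path V E p \<and> hd p = x \<and> last p = y}. enat (plen p))"

definition gdiam :: "'v set \<Rightarrow> ('v \<times> 'v) set \<Rightarrow> 'v set \<Rightarrow> enat" where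
  "gdiam V E A = (SUP xy \<in> A \<times> A. gdist V E (fst xy) (snd xy))"

definition is_graph :: "'v set \<Rightarrow> ('v \<times> 'v) set \<Rightarrow> bool" where
  "is_graph V E \<longleftrightarrow> finite V \<and> V \<noteq> {} \<and> E \<subseteq> V \<times> V \<and>
     (\<forall>x y. (x, y) \<in> E \<longrightarrow> (y, x) \<notin> E)"

definition connected_graph :: "'v set \<Rightarrow> ('v \<times> 'v) set \<Rightarrow> bool" where
  "connected_graph V E \<longleftrightarrow> (\<forall>x\<in>V. \<forall>y\<in>V. \<exists>p. is_path V E p \<and> hd p = x \<and> last p = y)"

record ('a, 't) igs =
  syms :: "'a set"
  edg  :: "('a \<times> 'a) set"
  tys  :: "'t set"
  ityp :: "'a \<times> 'a \<Rightarrow> 't"          \<comment> \<open>typing (relevant on E only)\<close>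
  glue :: "'t \<Rightarrow> ('a \<times> 'a) set"

definition is_igs :: "('a, 't) igs \<Rightarrow> bool" where
  "is_igs R \<longleftrightarrow> is_graph (syms R) (edg R) \<and> connected_graph (syms R) (edg R) \<and>
     finite (tys R) \<and> ityp R ` edg R = tys R \<and>
     (\<forall>t\<in>tys R. glue R t \<noteq> {} \<and> glue R t \<subseteq> syms R \<times> syms R)"

text \<open>Words: w = w_1 ... w_m is the list [w_1,...,w_m]; the prefix [w]_k is take k w.\<close>
definition words :: "('a, 't) igs \<Rightarrow> nat \<Rightarrow> 'a list set" where
  "words R m = {w. length w = m \<and> set w \<subseteq> syms R}"

definition all_words :: "('a, 't) igs \<Rightarrow> 'a list set" where
  "all_words R = (\<Union>m\<in>{1..}. words R m)"

text \<open>Typed edges of the replacement graph G_m: triples (w, v, type).\<close>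
fun tedges :: "('a, 't) igs \<Rightarrow> nat \<Rightarrow> ('a list \<times> 'a list \<times> 't) set" where
  "tedges R 0 = {}"
| "tedges R (Suc m) =
     {(w @ [a], w @ [b], ityp R (a, b)) | w a b. w \<in> words R m \<and> (a, b) \<in> edg R}
   \<union> {(w @ [a], v @ [b], \<tau>) | w v \<tau> a b. (w, v, \<tau>) \<in> tedges R m \<and> (a, b) \<in> glue R \<tau>}"

definition redges :: "('a, 't) igs \<Rightarrow> nat \<Rightarrow> ('a list \<times> 'a list) set" where
  "redges R m = {(w, v). \<exists>\<tau>. (w, v, \<tau>) \<in> tedges R m}"

definition proj :: "nat \<Rightarrow> 'a list list \<Rightarrow> 'a list list" where
  "proj k p = remdups_adj (map (take k) p)"

definition intersection_path :: "('a, 't) igs \<Rightarrow> nat \<Rightarrow> 'a list list \<Rightarrow> bool" where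
  "intersection_path R m \<theta> \<longleftrightarrow> 1 \<le> m \<and>
     (\<exists>\<Theta> :: nat \<Rightarrow> 'a list list.
        \<Theta> m = \<theta> \<and>
        (\<forall>n\<ge>1. is_path (words R n) (redges R n) (\<Theta> n)) \<and>
        (\<forall>n k. 1 \<le> k \<and> k < n \<longrightarrow> proj k (\<Theta> n) = \<Theta> k) \<and>
        convergent (\<lambda>n. real (plen (\<Theta> n))))"

definition nbhd :: "('a, 't) igs \<Rightarrow> 'a list \<Rightarrow> 'a list set" where
  "nbhd R w = {v \<in> words R (length w).
      \<exists>\<theta>. intersection_path R (length w) \<theta> \<and> hd \<theta> = w \<and> last \<theta> = v}"

definition bounded_geometry :: "('a, 't) igs \<Rightarrow> bool" where
  "bounded_geometry R \<longleftrightarrow>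
     (SUP w \<in> all_words R. gdiam (words R (length w)) (redges R (length w)) (nbhd R w)) < \<infinity>"

definition igs_mapping :: "('a \<Rightarrow> 'b) \<Rightarrow> ('a, 's) igs \<Rightarrow> ('b, 't) igs \<Rightarrow> bool" where
  "igs_mapping \<phi> R R' \<longleftrightarrow>
     \<phi> ` syms R \<subseteq> syms R' \<and>
     (\<forall>(w, v) \<in> edg R. \<phi> w = \<phi> v \<or> (\<phi> w, \<phi> v) \<in> edg R' \<or> (\<phi> v, \<phi> w) \<in> edg R') \<and>
     (\<forall>(w1, v1) \<in> edg R.
        (\<phi> w1 = \<phi> v1 \<longrightarrow>
           (\<forall>(w2, v2) \<in> glue R (ityp R (w1, v1)). \<phi> w2 = \<phi> v2)) \<and>
        ((\<phi> w1, \<phi> v1) \<in> edg R' \<longrightarrow>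
           (\<forall>(w2, v2) \<in> glue R (ityp R (w1, v1)).
               (\<phi> w2, \<phi> v2) \<in> glue R' (ityp R' (\<phi> w1, \<phi> v1)))) \<and>
        ((\<phi> v1, \<phi> w1) \<in> edg R' \<longrightarrow>
           (\<forall>(w2, v2) \<in> glue R (ityp R (w1, v1)).
               (\<phi> v2, \<phi> w2) \<in> glue R' (ityp R' (\<phi> v1, \<phi> w1)))))"

definition igs_iso :: "('a \<Rightarrow> 'b) \<Rightarrow> ('a, 's) igs \<Rightarrow> ('b, 't) igs \<Rightarrow> bool" where
  "igs_iso \<phi> R R' \<longleftrightarrow>
     bij_betw \<phi> (syms R) (syms R') \<and>
     (\<forall>a\<in>syms R. \<forall>b\<in>syms R.
        ((a, b) \<in> edg R \<or> (b, a) \<in> edg R) \<longleftrightarrow>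
        ((\<phi> a, \<phi> b) \<in> edg R' \<or> (\<phi> b, \<phi> a) \<in> edg R')) \<and>
     igs_mapping \<phi> R R' \<and> igs_mapping (inv_into (syms R) \<phi>) R' R"

definition sub_igs :: "('a, 't) igs \<Rightarrow> ('a, 't) igs \<Rightarrow> bool" where
  "sub_igs R R' \<longleftrightarrow> is_igs R \<and> is_igs R' \<and> syms R \<subseteq> syms R' \<and> tys R = tys R' \<and>
     igs_mapping id R R'"

text \<open>Symbols of R(d,L,s): pairs (c, sigma) with c a coordinate list of length d
  (coordinates indexed 0..d-1) with entries in {1..L}, and a sheet sigma in {1..s}.
  The types t_1..t_d are represented by the indices 0..d-1.\<close>

type_synonym csym = "nat list \<times> nat"

definition cube_syms :: "nat \<Rightarrow> nat \<Rightarrow> nat \<Rightarrow> csym set" where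
  "cube_syms d L s = {(c, \<sigma>). length c = d \<and> (\<forall>i<d. 1 \<le> c ! i \<and> c ! i \<le> L) \<and> 1 \<le> \<sigma> \<and> \<sigma> \<le> s}"

definition cube_edge_j :: "nat \<Rightarrow> nat \<Rightarrow> csym \<Rightarrow> csym \<Rightarrow> bool" where
  "cube_edge_j d j w v \<longleftrightarrow> j < d \<and> (\<forall>i<d. i \<noteq> j \<longrightarrow> fst v ! i = fst w ! i) \<and>
     fst v ! j = fst w ! j + 1"

definition cube_glue_j :: "nat \<Rightarrow> nat \<Rightarrow> nat \<Rightarrow> csym \<Rightarrow> csym \<Rightarrow> bool" where
  "cube_glue_j d L j w v \<longleftrightarrow> j < d \<and> (\<forall>i<d. i \<noteq> j \<longrightarrow> fst w ! i = fst v ! i) \<and>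
     fst w ! j = L \<and> fst v ! j = 1 \<and> snd w = snd v"

definition full_cube :: "nat \<Rightarrow> nat \<Rightarrow> nat \<Rightarrow> (csym, nat) igs" where
  "full_cube d L s =
     \<lparr> syms = cube_syms d L s,
       edg = {(w, v). w \<in> cube_syms d L s \<and> v \<in> cube_syms d L s \<and> (\<exists>j. cube_edge_j d j w v)},
       tys = {..<d},
       ityp = (\<lambda>(w, v). LEAST j. j < d \<and> fst w ! j \<noteq> fst v ! j),
       glue = (\<lambda>j. {(w, v). w \<in> cube_syms d L s \<and> v \<in> cube_syms d L s \<and> cube_glue_j d L j w v}) \<rparr>"

definition eta :: "nat \<Rightarrow> nat \<Rightarrow> csym \<Rightarrow> csym" where
  "eta L j = (\<lambda>(c, \<sigma>). (c[j := L + 1 - c ! j], \<sigma>))"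

definition alpha_plus :: "nat \<Rightarrow> nat \<Rightarrow> csym \<Rightarrow> csym" where
  "alpha_plus j k = (\<lambda>(c, \<sigma>). (c[j := c ! k, k := c ! j], \<sigma>))"

definition alpha_minus :: "nat \<Rightarrow> nat \<Rightarrow> nat \<Rightarrow> csym \<Rightarrow> csym" where
  "alpha_minus L j k = (\<lambda>(c, \<sigma>). (c[k := L + 1 - c ! j, j := L + 1 - c ! k], \<sigma>))"

definition cube_group :: "nat \<Rightarrow> nat \<Rightarrow> (csym \<Rightarrow> csym) set" where
  "cube_group d L = {eta L j | j. j < d}
     \<union> {alpha_plus j k | j k. j < d \<and> k < d \<and> j \<noteq> k}
     \<union> {alpha_minus L j k | j k. j < d \<and> k < d \<and> j \<noteq> k}"

definition star_cond :: "nat \<Rightarrow> nat \<Rightarrow> nat \<Rightarrow> nat \<Rightarrow> csym \<Rightarrow> bool" where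
  "star_cond d L s j w \<longleftrightarrow> w \<in> cube_syms d L s \<and>
     (\<forall>i<d. i \<noteq> j \<longrightarrow> fst w ! i = 1 \<or> fst w ! i = L) \<and> snd w = 1"

definition cubical_igs :: "nat \<Rightarrow> nat \<Rightarrow> nat \<Rightarrow> (csym, nat) igs \<Rightarrow> bool" where
  "cubical_igs d L s R \<longleftrightarrow> 1 \<le> d \<and> 1 \<le> s \<and> 3 \<le> L \<and>
     sub_igs R (full_cube d L s) \<and>
     (\<forall>j<d. \<forall>w. star_cond d L s j w \<longrightarrow> w \<in> syms R) \<and>
     (\<forall>j<d. \<forall>w v. star_cond d L s j w \<and> star_cond d L s j v \<and>
        (\<forall>i<d. i \<noteq> j \<longrightarrow> fst w ! i = fst v ! i) \<and> fst v ! j = fst w ! j + 1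
        \<longrightarrow> (w, v) \<in> edg R) \<and>
     (\<forall>j<d. \<forall>w v. star_cond d L s j w \<and> star_cond d L s j v \<and>
        (\<forall>i<d. i \<noteq> j \<longrightarrow> fst w ! i = fst v ! i) \<and> fst w ! j = L \<and> fst v ! j = 1
        \<longrightarrow> (w, v) \<in> glue R j) \<and>
     (\<forall>\<alpha>\<in>cube_group d L. igs_iso \<alpha> R R)"

end

(*
  A word w of length m is read as a cell of the grid {0..L^m-1}^d: its position along axis j
  is the base-L number whose digits are the j-th coordinates of the letters of w, shifted to
  0..L-1.  Because the edges of each type t point in direction t and are glued from L to 1,
  an edge of type t of G_m moves the cell by one step in direction t, carrying at a letter
  determined by the digits of its tail, and changes sheets only at that letter.

  An intersection path is the projection of a path one level deeper at a level where the
  projection collapses nothing.  Along that path the prefix and the last letter move together,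
  which by a base-L carry argument confines the positions of all its vertices, along every axis,
  to two consecutive values.  Hence all edges of a given type in an intersection path carry at
  the same letter, and a vertex is determined by its offsets in {0,1}^d together with its
  letters at these d carry levels.  So an intersection path has at most 2^d |S|^d vertices,
  and every N(w) has diameter at most twice that.
*)
theory Submission
  imports Defs Complex_Main
begin

lemma is_path_iff_successively:
  "is_path V E p \<longleftrightarrow> p \<noteq> [] \<and> set p \<subseteq> V \<and> successively (\<lambda>x y. (x, y) \<in> E \<or> (y, x) \<in> E) p"
  unfolding is_path_def successively_conv_nth by blast

lemma successively_loop_erasure:
  assumes "successively (\<lambda>x y. Q x y \<or> x = y) p" "p \<noteq> []"
  shows "\<exists>q. q \<noteq> [] \<and> distinct q \<and> successively Q q \<and> set q \<subseteq> set p \<and>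
             hd q = hd p \<and> last q = last p"
  using assms
proof (induction p)
  case Nil then show ?case by simp
next
  case (Cons x p)
  show ?case
  proof (cases "p = []")
    case True then show ?thesis by (intro exI[of _ "[x]"]) simp
  next
    case False
    have step: "Q x (hd p) \<or> x = hd p" and "successively (\<lambda>x y. Q x y \<or> x = y) p"
      using Cons.prems(1) False by (auto simp: successively_Cons)
    then obtain q where q: "q \<noteq> []" "distinct q" "successively Q q" "set q \<subseteq> set p"
        "hd q = hd p" "last q = last p"
      using Cons.IH False by blast
    show ?thesis
    proof (cases "x \<in> set q")
      case True
      then obtain q1 q2 where q12: "q = q1 @ x # q2" by (meson split_list)
      have "last (x # q2) = last (x # p)" using q(6) q12 False by (cases q2) auto
      then show ?thesis using q q12 by (intro exI[of _ "x # q2"]) (auto simp: successively_append_iff)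
    next
      case False
      then have "Q x (hd q)" using step q(1,5) by (metis list.set_sel(1))
      then show ?thesis using q False \<open>p \<noteq> []\<close> by (intro exI[of _ "x # q"]) (auto simp: successively_Cons)
    qed
  qed
qed

lemma gdist_le_card_set:
  assumes "p \<noteq> []" "set p \<subseteq> V" "successively (\<lambda>x y. (x, y) \<in> E \<or> (y, x) \<in> E \<or> x = y) p"
  shows "gdist V E (hd p) (last p) \<le> enat (card (set p) - 1)"
proof -
  obtain q where q: "q \<noteq> []" "distinct q" "successively (\<lambda>x y. (x, y) \<in> E \<or> (y, x) \<in> E) q"
      "set q \<subseteq> set p" "hd q = hd p" "last q = last p"
    using successively_loop_erasure[of "\<lambda>x y. (x, y) \<in> E \<or> (y, x) \<in> E" p] assms by auto
  have "is_path V E q" using q assms(2) by (auto simp: is_path_iff_successively)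
  then have "gdist V E (hd p) (last p) \<le> enat (plen q)"
    unfolding gdist_def using q by (intro INF_lower) auto
  also have "plen q \<le> card (set p) - 1"
    using q(2) card_mono[OF _ q(4)] by (simp add: plen_def distinct_card)
  finally show ?thesis by simp
qed

lemma gdiam_le_if_short_paths_from:
  assumes "\<And>v. v \<in> A \<Longrightarrow> \<exists>p. is_path V E p \<and> hd p = c \<and> last p = v \<and> card (set p) \<le> N"
  shows "gdiam V E A \<le> enat (2 * N)"
  unfolding gdiam_def
proof (rule SUP_least)
  fix vv assume "vv \<in> A \<times> A"
  then obtain v1 v2 where "vv = (v1, v2)" "v1 \<in> A" "v2 \<in> A" by blast
  then obtain p1 p2 where p1: "is_path V E p1" "hd p1 = c" "last p1 = v1" "card (set p1) \<le> N"
    and p2: "is_path V E p2" "hd p2 = c" "last p2 = v2" "card (set p2) \<le> N"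
    using assms by meson
  let ?adj = "\<lambda>x y. (x, y) \<in> E \<or> (y, x) \<in> E"
  define p where "p = rev p1 @ p2"
  have "p \<noteq> []" "set p \<subseteq> V" "hd p = v1" "last p = v2"
    using p1 p2 by (auto simp: p_def is_path_def hd_rev)
  moreover have "successively (\<lambda>x y. ?adj x y \<or> x = y) p"
  proof -
    have "successively ?adj (rev p1)" "successively ?adj p2"
      using p1(1) p2(1) by (simp_all add: is_path_iff_successively disj_commute)
    then have "successively (\<lambda>x y. ?adj x y \<or> x = y) (rev p1)"
      "successively (\<lambda>x y. ?adj x y \<or> x = y) p2"
      by (auto intro: successively_mono)
    moreover have "last (rev p1) = hd p2" using p1 p2 by (simp add: last_rev)
    ultimately show ?thesis unfolding p_def successively_append_iff by blast
  qed
  ultimately have "gdist V E v1 v2 \<le> enat (card (set p) - 1)"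
    using gdist_le_card_set[of p V E] by simp
  also have "\<dots> \<le> enat (2 * N)"
    using p1(4) p2(4) card_Un_le[of "set p1" "set p2"] by (simp add: p_def)
  finally show "gdist V E (fst vv) (snd vv) \<le> enat (2 * N)" using \<open>vv = (v1, v2)\<close> by simp
qed

lemma successively_const:
  assumes "successively P xs" "\<And>x y. x \<in> set xs \<Longrightarrow> y \<in> set xs \<Longrightarrow> P x y \<Longrightarrow> f x = f y"
    "x \<in> set xs"
  shows "f x = f (hd xs)"
  using assms
proof (induction xs arbitrary: x)
  case (Cons a xs)
  show ?case
  proof (cases "x = a")
    case False
    then have xs: "x \<in> set xs" "xs \<noteq> []" using Cons.prems(3) by auto
    have "successively P xs" "P a (hd xs)" using Cons.prems(1) xs(2) by (auto simp: successively_Cons)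
    then have "f x = f (hd xs)" "f a = f (hd xs)"
      using Cons.IH[OF _ _ xs(1)] Cons.prems(2) xs by auto
    then show ?thesis by simp
  qed simp
qed simp

lemma intersection_path_is_path:
  "intersection_path R m \<theta> \<Longrightarrow> is_path (words R m) (redges R m) \<theta>"
  unfolding intersection_path_def by auto

lemma intersection_path_stable_lift:
  assumes "intersection_path R m \<theta>"
  obtains n zs where "m \<le> n" "is_path (words R (Suc n)) (redges R (Suc n)) zs"
    "distinct_adj (map (take n) zs)" "\<theta> = proj m zs"
proof -
  obtain \<Theta> where m: "1 \<le> m" and \<Theta>: "\<Theta> m = \<theta>"
      "\<And>n. 1 \<le> n \<Longrightarrow> is_path (words R n) (redges R n) (\<Theta> n)"
      "\<And>n k. 1 \<le> k \<Longrightarrow> k < n \<Longrightarrow> proj k (\<Theta> n) = \<Theta> k"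
    and conv: "convergent (\<lambda>n. real (plen (\<Theta> n)))"
    using assms unfolding intersection_path_def by blast
  \<comment> \<open>a convergent sequence of naturals is eventually constant\<close>
  obtain M where M: "\<And>i j. M \<le> i \<Longrightarrow> M \<le> j \<Longrightarrow> \<bar>real (plen (\<Theta> i)) - real (plen (\<Theta> j))\<bar> < 1"
    using CauchyD[of _ 1] conv unfolding Cauchy_convergent_iff[symmetric] by fastforce
  define n where "n = max m M"
  have "\<bar>real (plen (\<Theta> (Suc n))) - real (plen (\<Theta> n))\<bar> < 1"
    using M by (simp add: n_def)
  then have same_len: "plen (\<Theta> (Suc n)) = plen (\<Theta> n)" by linarith
  have "0 < length (\<Theta> (Suc n))" "0 < length (\<Theta> n)"
    using \<Theta>(2)[of n] \<Theta>(2)[of "Suc n"] m by (auto simp: n_def is_path_def)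
  then have "length (\<Theta> (Suc n)) = length (\<Theta> n)" using same_len unfolding plen_def by linarith
  moreover have "proj n (\<Theta> (Suc n)) = \<Theta> n" using \<Theta>(3) m by (simp add: n_def)
  ultimately have "length (remdups_adj (map (take n) (\<Theta> (Suc n)))) = length (map (take n) (\<Theta> (Suc n)))"
    by (simp add: proj_def)
  then have "distinct_adj (map (take n) (\<Theta> (Suc n)))"
    by (simp add: distinct_adj_conv_length_remdups_adj)
  moreover have "\<theta> = proj m (\<Theta> (Suc n))" using \<Theta> m by (simp add: n_def)
  ultimately show thesis using that[of n] \<Theta>(2)[of "Suc n"] by (simp add: n_def)
qed

lemma igs_mapping_edge:
  assumes "igs_mapping \<phi> R R'" "(a, b) \<in> edg R"
  shows "\<phi> a = \<phi> b \<or> (\<phi> a, \<phi> b) \<in> edg R' \<or> (\<phi> b, \<phi> a) \<in> edg R'"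
  using assms unfolding igs_mapping_def by fast

lemma igs_mapping_glue:
  assumes "igs_mapping \<phi> R R'" "(a, b) \<in> edg R" "(x, y) \<in> glue R (ityp R (a, b))"
  shows "(\<phi> a, \<phi> b) \<in> edg R' \<Longrightarrow> (\<phi> x, \<phi> y) \<in> glue R' (ityp R' (\<phi> a, \<phi> b))"
    and "(\<phi> b, \<phi> a) \<in> edg R' \<Longrightarrow> (\<phi> y, \<phi> x) \<in> glue R' (ityp R' (\<phi> b, \<phi> a))"
  using assms unfolding igs_mapping_def by fast+

lemma ityp_full_cube:
  assumes "cube_edge_j d j a b"
  shows "ityp (full_cube d L s) (a, b) = j"
  unfolding full_cube_def using assms by (auto simp: cube_edge_j_def intro!: Least_equality)

lemma horner_sum_less_power:
  fixes b :: nat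
  assumes "\<And>x. x \<in> set xs \<Longrightarrow> f x < b"
  shows "horner_sum f b xs < b ^ length xs"
  using assms
proof (induction xs)
  case (Cons x xs)
  have "horner_sum f b (x # xs) < b + b * horner_sum f b xs" using Cons.prems by simp
  also have "\<dots> = b * (horner_sum f b xs + 1)" by simp
  also have "\<dots> \<le> b * b ^ length xs" using Cons by (intro mult_le_mono2) auto
  finally show ?case by simp
qed simp

lemma horner_sum_digits_eq:
  fixes b :: nat
  assumes "length xs = length ys" "\<And>x. x \<in> set xs \<union> set ys \<Longrightarrow> f x < b"
    "horner_sum f b xs = horner_sum f b ys"
  shows "map f xs = map f ys"
  using assms
proof (induction xs ys rule: list_induct2)
  case (Cons x xs y ys)
  have digits: "f x < b" "f y < b" using Cons.prems(1) by auto
  then have "f x = f y"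
    using arg_cong[OF Cons.prems(2), of "\<lambda>v. v mod b"] by simp
  moreover have "horner_sum f b xs = horner_sum f b ys"
    using Cons.prems(2) calculation digits by simp
  ultimately show ?case using Cons by auto
qed simp

definition grid_digit :: "nat \<Rightarrow> csym \<Rightarrow> nat" where
  "grid_digit j a = fst a ! j - 1"

definition grid_pos :: "nat \<Rightarrow> nat \<Rightarrow> csym list \<Rightarrow> nat" where
  "grid_pos L j w = horner_sum (grid_digit j) L (rev w)"

text \<open>Index of the last letter of w whose j-th digit is not maximal: a step in direction j
  from w increments that letter and wraps all later ones around.\<close>

definition carry_level :: "nat \<Rightarrow> nat \<Rightarrow> csym list \<Rightarrow> nat" where
  "carry_level L j w = length (dropWhile (\<lambda>c. c = L - 1) (rev (map (grid_digit j) w))) - 1"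

lemma grid_pos_snoc [simp]:
  "grid_pos L j (w @ [a]) = grid_digit j a + L * grid_pos L j w"
  by (simp add: grid_pos_def)

lemma grid_pos_append:
  "grid_pos L j (u @ v) = grid_pos L j v + L ^ length v * grid_pos L j u"
  by (simp add: grid_pos_def horner_sum_append)

lemma carry_level_less:
  assumes "w \<noteq> []"
  shows "carry_level L j w < length w"
proof -
  have "length (dropWhile (\<lambda>c. c = L - 1) (rev (map (grid_digit j) w))) \<le> length w"
    by (metis length_dropWhile_le length_map length_rev)
  moreover have "0 < length w" using assms by simp
  ultimately show ?thesis unfolding carry_level_def by linarith
qed

lemma carry_level_split:
  assumes "grid_digit j a \<noteq> L - 1" "\<And>c. c \<in> set g \<Longrightarrow> grid_digit j c = L - 1"
  shows "carry_level L j (u @ a # g) = length u"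
proof -
  have "dropWhile (\<lambda>c. c = L - 1) (rev (map (grid_digit j) g) @ grid_digit j a # rev (map (grid_digit j) u))
      = grid_digit j a # rev (map (grid_digit j) u)"
    using assms by (subst dropWhile_append2) auto
  then show ?thesis by (simp add: carry_level_def)
qed

lemma tedges_SucE:
  assumes "(x, y, \<tau>) \<in> tedges R (Suc n)"
  obtains (inner) w a b where "x = w @ [a]" "y = w @ [b]" "\<tau> = ityp R (a, b)" "(a, b) \<in> edg R"
  | (glued) w v a b where "x = w @ [a]" "y = v @ [b]" "(w, v, \<tau>) \<in> tedges R n" "(a, b) \<in> glue R \<tau>"
  using assms by (simp only: tedges.simps) blast

lemma tedges_snocD:
  assumes "(x @ [a], y @ [b], \<tau>) \<in> tedges R (Suc n)" "x \<noteq> y"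
  shows "(x, y, \<tau>) \<in> tedges R n"
  using assms by (cases rule: tedges_SucE) auto

lemma tedges_decomp:
  assumes "(x, y, \<tau>) \<in> tedges R n"
  shows "\<exists>u a b g h. x = u @ a # g \<and> y = u @ b # h \<and> (a, b) \<in> edg R \<and> ityp R (a, b) = \<tau> \<and>
    list_all2 (\<lambda>p q. (p, q) \<in> glue R \<tau>) g h"
  using assms
proof (induction n arbitrary: x y \<tau>)
  case (Suc n)
  from Suc.prems show ?case
  proof (cases rule: tedges_SucE)
    case (inner w a b)
    then show ?thesis by (intro exI[of _ w] exI[of _ a] exI[of _ b] exI[of _ "[]"]) simp
  next
    case (glued w v a b)
    then obtain u a' b' g h where "w = u @ a' # g" "v = u @ b' # h" "(a', b') \<in> edg R"
        "ityp R (a', b') = \<tau>" "list_all2 (\<lambda>p q. (p, q) \<in> glue R \<tau>) g h"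
      using Suc.IH by blast
    with glued show ?thesis
      by (intro exI[of _ u] exI[of _ a'] exI[of _ b'] exI[of _ "g @ [a]"] exI[of _ "h @ [b]"])
        (simp add: list_all2_appendI)
  qed
qed simp

locale cubical =
  fixes d L s :: nat and R :: "(csym, nat) igs"
  assumes cubical: "cubical_igs d L s R"
begin

lemma L_ge_3: "3 \<le> L"
  using cubical by (simp add: cubical_igs_def)

lemma s_ge_1: "1 \<le> s"
  using cubical by (simp add: cubical_igs_def)

lemma star_cond_glue:
  assumes "j < d" "star_cond d L s j w" "star_cond d L s j v"
    "\<forall>i<d. i \<noteq> j \<longrightarrow> fst w ! i = fst v ! i" "fst w ! j = L" "fst v ! j = 1"
  shows "(w, v) \<in> glue R j"
proof -
  have "\<forall>j<d. \<forall>w v. star_cond d L s j w \<and> star_cond d L s j v \<and>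
      (\<forall>i<d. i \<noteq> j \<longrightarrow> fst w ! i = fst v ! i) \<and> fst w ! j = L \<and> fst v ! j = 1
      \<longrightarrow> (w, v) \<in> glue R j"
    using cubical by (simp add: cubical_igs_def)
  then show ?thesis using assms by blast
qed

lemma is_igs: "is_igs R"
  using cubical by (simp add: cubical_igs_def sub_igs_def)

lemma maps_into_full_cube: "igs_mapping id R (full_cube d L s)"
  using cubical by (simp add: cubical_igs_def sub_igs_def)

lemma tys_eq: "tys R = {..<d}"
  using cubical by (simp add: cubical_igs_def sub_igs_def full_cube_def)

lemma syms_subset: "syms R \<subseteq> cube_syms d L s"
  using maps_into_full_cube by (simp add: igs_mapping_def full_cube_def)

lemma finite_syms: "finite (syms R)"
  using is_igs by (simp add: is_igs_def is_graph_def)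

lemma edg_syms: "(a, b) \<in> edg R \<Longrightarrow> a \<in> syms R \<and> b \<in> syms R"
  using is_igs by (auto simp: is_igs_def is_graph_def)

lemma edg_asym:
  assumes "(a, b) \<in> edg R"
  shows "(b, a) \<notin> edg R"
proof -
  have "is_graph (syms R) (edg R)" using is_igs by (simp add: is_igs_def)
  then show ?thesis using assms unfolding is_graph_def by blast
qed

lemma ityp_less: "(a, b) \<in> edg R \<Longrightarrow> ityp R (a, b) < d"
  using is_igs tys_eq by (auto simp: is_igs_def)

lemma coord_bounds: "a \<in> syms R \<Longrightarrow> j < d \<Longrightarrow> 1 \<le> fst a ! j \<and> fst a ! j \<le> L"
  using syms_subset by (auto simp: cube_syms_def)

lemma grid_digit_less: "a \<in> syms R \<Longrightarrow> j < d \<Longrightarrow> grid_digit j a < L"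
  using coord_bounds L_ge_3 by (fastforce simp: grid_digit_def)

text \<open>By (C3) every type t has a gluing pair differing exactly in coordinate t; since the
  inclusion into the full cube maps gluing rules to gluing rules, this forces each edge of
  type t to point in direction t.\<close>

lemma edge_along_type:
  assumes ab: "(a, b) \<in> edg R"
  shows "cube_edge_j d (ityp R (a, b)) a b \<and>
    (\<forall>(x, y) \<in> glue R (ityp R (a, b)). cube_glue_j d L (ityp R (a, b)) x y)"
proof -
  let ?C = "full_cube d L s" and ?t = "ityp R (a, b)"
  have t: "?t < d" using ab by (rule ityp_less)
  define x0 where "x0 = ((replicate d 1)[?t := L], 1::nat)"
  define y0 where "y0 = (replicate d (1::nat), 1::nat)"
  have glue0: "(x0, y0) \<in> glue R ?t"
    using t L_ge_3 s_ge_1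
    by (intro star_cond_glue) (auto simp: star_cond_def cube_syms_def x0_def y0_def nth_list_update)
  have "a \<noteq> b" using ab edg_asym by blast
  then have "(a, b) \<in> edg ?C \<or> (b, a) \<in> edg ?C"
    using igs_mapping_edge[OF maps_into_full_cube ab] by simp
  then show ?thesis
  proof
    assume ab_C: "(a, b) \<in> edg ?C"
    then obtain j where j: "cube_edge_j d j a b" by (auto simp: full_cube_def)
    have glue_j: "cube_glue_j d L j x y" if "(x, y) \<in> glue R ?t" for x y
      using igs_mapping_glue(1)[OF maps_into_full_cube ab that] ab_C ityp_full_cube[OF j]
      by (simp add: full_cube_def)
    have "j = ?t"
    proof (rule ccontr)
      assume "j \<noteq> ?t"
      moreover have "\<forall>i<d. i \<noteq> j \<longrightarrow> fst x0 ! i = fst y0 ! i"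
        using glue_j[OF glue0] by (simp add: cube_glue_j_def)
      ultimately have "fst x0 ! ?t = fst y0 ! ?t" using t by blast
      then show False using t L_ge_3 by (simp add: x0_def y0_def)
    qed
    then show ?thesis using j glue_j by blast
  next
    assume ba_C: "(b, a) \<in> edg ?C"
    then obtain j where j: "cube_edge_j d j b a" by (auto simp: full_cube_def)
    have "cube_glue_j d L j y0 x0"
      using igs_mapping_glue(2)[OF maps_into_full_cube ab glue0] ba_C ityp_full_cube[OF j]
      by (simp add: full_cube_def)
    then have "j < d" "fst y0 ! j = L" by (simp_all add: cube_glue_j_def)
    then show ?thesis using L_ge_3 by (simp add: y0_def)
  qed
qed

lemma glue_along_type:
  assumes "t < d" "(x, y) \<in> glue R t"
  shows "cube_glue_j d L t x y"
proof -
  have "t \<in> ityp R ` edg R" using assms(1) is_igs tys_eq by (simp add: is_igs_def)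
  then obtain e where e: "e \<in> edg R" "t = ityp R e" by blast
  then have "(fst e, snd e) \<in> edg R" by simp
  from edge_along_type[OF this] have "\<forall>(x', y') \<in> glue R t. cube_glue_j d L t x' y'"
    using e(2) by simp
  then show ?thesis using assms(2) by blast
qed

lemma tedges_type_less: "(x, y, \<tau>) \<in> tedges R n \<Longrightarrow> \<tau> < d"
proof (induction n arbitrary: x y \<tau>)
  case (Suc n)
  from Suc.prems show ?case
    by (cases rule: tedges_SucE) (auto intro: ityp_less Suc.IH)
qed simp

lemma tedges_grid_pos:
  assumes "(x, y, \<tau>) \<in> tedges R n" "j < d"
  shows "grid_pos L j y = grid_pos L j x + (if j = \<tau> then 1 else 0)"
  using assms
proof (induction n arbitrary: x y \<tau>)
  case (Suc n)
  from Suc.prems(1) show ?case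
  proof (cases rule: tedges_SucE)
    case (inner w a b)
    then have "cube_edge_j d \<tau> a b" using edge_along_type by simp
    moreover have "1 \<le> fst a ! \<tau>" using coord_bounds edg_syms inner(4) calculation
      by (auto simp: cube_edge_j_def)
    ultimately show ?thesis using inner Suc.prems(2) by (auto simp: cube_edge_j_def grid_digit_def)
  next
    case (glued w v a b)
    have "\<tau> < d" using glued(3) by (rule tedges_type_less)
    then have ab: "cube_glue_j d L \<tau> a b" using glue_along_type glued(4) by blast
    have "grid_pos L j v = grid_pos L j w + (if j = \<tau> then 1 else 0)"
      using Suc.IH glued(3) Suc.prems(2) by blast
    then show ?thesis
      using ab glued(1,2) Suc.prems(2) L_ge_3 by (auto simp: cube_glue_j_def grid_digit_def)
  qed
qed simp

lemma tedges_sheet_eq: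
  assumes "(x, y, \<tau>) \<in> tedges R n" "k < length x" "k \<noteq> carry_level L \<tau> x"
  shows "snd (x ! k) = snd (y ! k)"
proof -
  obtain u a b g h where x: "x = u @ a # g" and y: "y = u @ b # h" and ab: "(a, b) \<in> edg R"
      "ityp R (a, b) = \<tau>" and gh: "list_all2 (\<lambda>p q. (p, q) \<in> glue R \<tau>) g h"
    using tedges_decomp[OF assms(1)] by blast
  have \<tau>: "\<tau> < d" using assms(1) by (rule tedges_type_less)
  have glue_gh: "cube_glue_j d L \<tau> (g ! i) (h ! i)" if "i < length g" for i
    using glue_along_type[OF \<tau>] gh that list_all2_nthD by blast
  have "cube_edge_j d \<tau> a b" using edge_along_type ab by blast
  moreover have "1 \<le> fst a ! \<tau>" "fst b ! \<tau> \<le> L" using coord_bounds edg_syms ab(1) \<tau> by blast+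
  ultimately have "grid_digit \<tau> a \<noteq> L - 1" by (auto simp: cube_edge_j_def grid_digit_def)
  moreover have "grid_digit \<tau> c = L - 1" if "c \<in> set g" for c
    using that glue_gh by (auto simp: in_set_conv_nth cube_glue_j_def grid_digit_def)
  ultimately have "carry_level L \<tau> x = length u" unfolding x by (rule carry_level_split)
  then consider "k < length u" | i where "k = Suc (length u + i)" "i < length g"
  proof (cases "k < length u")
    case False
    then have "k = Suc (length u + (k - length u - 1))" "k - length u - 1 < length g"
      using assms(2,3) x \<open>carry_level L \<tau> x = length u\<close> by auto
    then show thesis using that(2) by blast
  qed
  then show ?thesis
  proof cases
    case 1 then show ?thesis using x y by (simp add: nth_append)
  next
    case 2 then show ?thesis using x y glue_gh by (simp add: nth_append cube_glue_j_def)
  qed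
qed

lemma grid_pos_less_power:
  assumes "set u \<subseteq> syms R" "j < d"
  shows "grid_pos L j u < L ^ length u"
  unfolding grid_pos_def using assms grid_digit_less
  by (subst length_rev[symmetric]) (intro horner_sum_less_power, auto)

lemma grid_pos_take_le_Suc:
  assumes "u \<in> words R n" "u' \<in> words R n" "k \<le> n" "j < d"
    and "grid_pos L j u \<le> Suc (grid_pos L j u')"
  shows "grid_pos L j (take k u) \<le> Suc (grid_pos L j (take k u'))"
proof -
  define M where "M = L ^ (n - k)"
  have len: "length u = n" "length u' = n" using assms(1,2) by (simp_all add: words_def)
  have "grid_pos L j (drop k u') < M"
    using grid_pos_less_power[of "drop k u'" j] assms(2,4) len
    by (auto simp: M_def words_def dest: in_set_dropD)
  have "M * grid_pos L j (take k u) \<le> grid_pos L j u"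
    using grid_pos_append[of L j "take k u" "drop k u"] len assms(3) by (simp add: M_def)
  also have "\<dots> \<le> Suc (grid_pos L j u')" by (fact assms(5))
  also have "\<dots> = Suc (grid_pos L j (drop k u') + M * grid_pos L j (take k u'))"
    using grid_pos_append[of L j "take k u'" "drop k u'"] len assms(3) by (simp add: M_def)
  also have "\<dots> \<le> M * Suc (grid_pos L j (take k u'))"
    using \<open>grid_pos L j (drop k u') < M\<close> by simp
  finally have "M * grid_pos L j (take k u) \<le> M * Suc (grid_pos L j (take k u'))" .
  moreover have "0 < M" using \<open>grid_pos L j (drop k u') < M\<close> by simp
  ultimately show ?thesis by (simp only: mult_le_cancel1)
qed

lemma digits_eq_if_grid_pos_eq:
  assumes "u \<in> words R n" "u' \<in> words R n" "j < d" "grid_pos L j u = grid_pos L j u'"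
  shows "map (grid_digit j) u = map (grid_digit j) u'"
proof -
  have "map (grid_digit j) (rev u) = map (grid_digit j) (rev u')"
    using assms grid_digit_less
    by (intro horner_sum_digits_eq) (auto simp: words_def grid_pos_def)
  then show ?thesis by (metis rev_map rev_rev_ident)
qed

lemma words_eqI:
  assumes u: "u \<in> words R n" and u': "u' \<in> words R n"
    and pos: "\<And>j. j < d \<Longrightarrow> grid_pos L j u = grid_pos L j u'"
    and sheet: "\<And>k. k < n \<Longrightarrow> snd (u ! k) = snd (u' ! k)"
  shows "u = u'"
proof (rule nth_equalityI)
  show len: "length u = length u'" using u u' by (simp add: words_def)
  fix k assume k: "k < length u"
  have syms: "u ! k \<in> syms R" "u' ! k \<in> syms R"
    using u u' k len by (auto simp: words_def)
  have "fst (u ! k) ! j = fst (u' ! k) ! j" if j: "j < d" for j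
  proof -
    have "grid_digit j (u ! k) = grid_digit j (u' ! k)"
      using digits_eq_if_grid_pos_eq[OF u u' j pos[OF j]] k len by (metis nth_map)
    then show ?thesis using coord_bounds[OF syms(1) j] coord_bounds[OF syms(2) j]
      unfolding grid_digit_def by arith
  qed
  moreover have "length (fst (u ! k)) = d" "length (fst (u' ! k)) = d"
    using syms syms_subset by (auto simp: cube_syms_def)
  ultimately have "fst (u ! k) = fst (u' ! k)" by (simp add: nth_equalityI)
  moreover have "snd (u ! k) = snd (u' ! k)" using sheet k u by (simp add: words_def)
  ultimately show "u ! k = u' ! k" by (simp add: prod_eq_iff)
qed

text \<open>Every step of zs changes its level-n prefix, so it is a glued edge and the word and its
  prefix move by the same amount.  Hence (L - 1) * (position of the prefix) + (last digit) is
  constant along zs, and since last digits lie in 0..L-1 the prefix positions differ by at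
  most one.\<close>

lemma grid_pos_window:
  assumes path: "is_path (words R (Suc n)) (redges R (Suc n)) zs"
    and sep: "distinct_adj (map (take n) zs)"
    and j: "j < d" and z: "z \<in> set zs" "z' \<in> set zs"
  shows "grid_pos L j (take n z) \<le> Suc (grid_pos L j (take n z'))"
proof -
  define drift where "drift z = grid_pos L j z - grid_pos L j (take n z)" for z
  have words: "z \<in> words R (Suc n)" if "z \<in> set zs" for z
    using path that by (auto simp: is_path_def)
  have split: "z = take n z @ [last z]" if "z \<in> set zs" for z
  proof -
    have "length z = Suc n" using words[OF that] by (simp add: words_def)
    then have "z \<noteq> []" by auto
    then show ?thesis using append_butlast_last_id[of z] \<open>length z = Suc n\<close> by (simp add: butlast_conv_take)
  qed
  have drift_eq: "drift z = (L - 1) * grid_pos L j (take n z) + grid_digit j (last z)"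
    if "z \<in> set zs" for z
  proof -
    have "grid_pos L j z = grid_digit j (last z) + L * grid_pos L j (take n z)"
      using arg_cong[OF split[OF that], of "grid_pos L j"] by simp
    moreover have "grid_pos L j (take n z) \<le> L * grid_pos L j (take n z)" using L_ge_3 by simp
    ultimately show ?thesis by (simp add: drift_def diff_mult_distrib)
  qed
  have drift_step: "drift x = drift y"
    if "x \<in> set zs" "y \<in> set zs" "(x, y, \<tau>) \<in> tedges R (Suc n)" "take n x \<noteq> take n y" for x y \<tau>
  proof -
    have "(take n x, take n y, \<tau>) \<in> tedges R n"
      using tedges_snocD[of "take n x" "last x" "take n y" "last y"] split that by metis
    from tedges_grid_pos[OF this j] tedges_grid_pos[OF that(3) j] show ?thesis
      unfolding drift_def by simp
  qed
  have "successively (\<lambda>x y. (x, y) \<in> redges R (Suc n) \<or> (y, x) \<in> redges R (Suc n)) zs"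
    "successively (\<lambda>x y. take n x \<noteq> take n y) zs"
    using path sep by (simp_all add: is_path_iff_successively distinct_adj_def successively_map)
  then have "successively (\<lambda>x y. ((x, y) \<in> redges R (Suc n) \<or> (y, x) \<in> redges R (Suc n)) \<and>
      take n x \<noteq> take n y) zs"
    by (auto simp: successively_conv_nth)
  then have "drift z = drift (hd zs)" if "z \<in> set zs" for z
  proof (rule successively_const[OF _ _ that])
    fix x y assume "x \<in> set zs" "y \<in> set zs"
      and "((x, y) \<in> redges R (Suc n) \<or> (y, x) \<in> redges R (Suc n)) \<and> take n x \<noteq> take n y"
    then show "drift x = drift y"
      unfolding redges_def by (auto intro: drift_step drift_step[symmetric])
  qed
  then have "(L - 1) * grid_pos L j (take n z) + grid_digit j (last z)
      = (L - 1) * grid_pos L j (take n z') + grid_digit j (last z')"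
    using z drift_eq by metis
  moreover have "grid_digit j (last z') < L"
  proof (rule grid_digit_less[OF _ j])
    have "length z' = Suc n" "set z' \<subseteq> syms R" using words[OF z(2)] by (simp_all add: words_def)
    then show "last z' \<in> syms R" by (metis last_in_set list.size(3) nat.distinct(1) subsetD)
  qed
  ultimately have "(L - 1) * grid_pos L j (take n z) \<le> (L - 1) * Suc (grid_pos L j (take n z'))"
    by simp
  moreover have "0 < L - 1" using L_ge_3 by simp
  ultimately show ?thesis using mult_le_cancel1 by blast
qed

lemma intersection_path_grid_pos_window:
  assumes "intersection_path R m \<theta>" "j < d" "y \<in> set \<theta>" "y' \<in> set \<theta>"
  shows "grid_pos L j y \<le> Suc (grid_pos L j y')"
proof -
  obtain n zs where n: "m \<le> n" and path: "is_path (words R (Suc n)) (redges R (Suc n)) zs"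
    and sep: "distinct_adj (map (take n) zs)" and \<theta>: "\<theta> = proj m zs"
    using assms(1) by (rule intersection_path_stable_lift)
  obtain z z' where z: "z \<in> set zs" "y = take m z" and z': "z' \<in> set zs" "y' = take m z'"
    using assms(3,4) \<theta> by (auto simp: proj_def)
  have "take n z \<in> words R n" "take n z' \<in> words R n"
    using path z(1) z'(1) by (auto simp: is_path_def words_def dest: in_set_takeD)
  from grid_pos_take_le_Suc[OF this n assms(2) grid_pos_window[OF path sep assms(2) z(1) z'(1)]]
  show ?thesis using z z' n by (simp add: min_absorb2)
qed

lemma intersection_path_carry_level_eq:
  assumes \<theta>: "intersection_path R m \<theta>" and e: "(x, x', \<tau>) \<in> tedges R m"
    and x: "x \<in> set \<theta>" "x' \<in> set \<theta>" and y: "y \<in> set \<theta>" "grid_pos L \<tau> y \<le> grid_pos L \<tau> x"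
  shows "carry_level L \<tau> x = carry_level L \<tau> y"
proof -
  have path: "is_path (words R m) (redges R m) \<theta>" using \<theta> by (rule intersection_path_is_path)
  have \<tau>: "\<tau> < d" using e by (rule tedges_type_less)
  have "grid_pos L \<tau> x' = Suc (grid_pos L \<tau> x)" using tedges_grid_pos[OF e \<tau>] by simp
  then have "grid_pos L \<tau> x = grid_pos L \<tau> y"
    using intersection_path_grid_pos_window[OF \<theta> \<tau> x(2) y(1)] y(2) by simp
  moreover have "x \<in> words R m" "y \<in> words R m" using path x(1) y(1) by (auto simp: is_path_def)
  ultimately have "map (grid_digit \<tau>) x = map (grid_digit \<tau>) y"
    using digits_eq_if_grid_pos_eq[OF _ _ \<tau>] by blast
  then show ?thesis by (simp add: carry_level_def)
qed

lemma intersection_path_sheet_eq: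
  assumes \<theta>: "intersection_path R m \<theta>"
    and low: "\<And>j. low j \<in> set \<theta>" "\<And>j y. y \<in> set \<theta> \<Longrightarrow> grid_pos L j (low j) \<le> grid_pos L j y"
    and y: "y \<in> set \<theta>" and k: "k < m" "k \<notin> (\<lambda>\<tau>. carry_level L \<tau> (low \<tau>)) ` {..<d}"
  shows "snd (y ! k) = snd (hd \<theta> ! k)"
proof -
  have path: "is_path (words R m) (redges R m) \<theta>" using \<theta> by (rule intersection_path_is_path)
  have edge_sheet: "snd (x ! k) = snd (x' ! k)"
    if x: "x \<in> set \<theta>" "x' \<in> set \<theta>" and "(x, x') \<in> redges R m" for x x'
  proof -
    obtain \<tau> where e: "(x, x', \<tau>) \<in> tedges R m"
      using \<open>(x, x') \<in> redges R m\<close> by (auto simp: redges_def)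
    have "\<tau> < d" using e by (rule tedges_type_less)
    moreover have "carry_level L \<tau> x = carry_level L \<tau> (low \<tau>)"
      using intersection_path_carry_level_eq[OF \<theta> e x low(1) low(2)[OF x(1)]] .
    ultimately have "k \<noteq> carry_level L \<tau> x" using k(2) by auto
    moreover have "k < length x" using path x(1) k(1) by (auto simp: is_path_def words_def)
    ultimately show ?thesis using tedges_sheet_eq[OF e] by simp
  qed
  have "successively (\<lambda>x x'. (x, x') \<in> redges R m \<or> (x', x) \<in> redges R m) \<theta>"
    using path by (simp add: is_path_iff_successively)
  then show ?thesis
  proof (rule successively_const[OF _ _ y])
    fix x x' assume "x \<in> set \<theta>" "x' \<in> set \<theta>"
      and "(x, x') \<in> redges R m \<or> (x', x) \<in> redges R m"
    then show "snd (x ! k) = snd (x' ! k)" using edge_sheet by metis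
  qed
qed

lemma intersection_path_card_le:
  assumes \<theta>: "intersection_path R m \<theta>"
  shows "card (set \<theta>) \<le> 2 ^ d * card (syms R) ^ d"
proof -
  have path: "is_path (words R m) (redges R m) \<theta>" using \<theta> by (rule intersection_path_is_path)
  have words: "y \<in> words R m" if "y \<in> set \<theta>" for y using path that by (auto simp: is_path_def)
  have "m \<noteq> 0" using \<theta> by (simp add: intersection_path_def)
  have "\<exists>y. y \<in> set \<theta> \<and> (\<forall>y'. y' \<in> set \<theta> \<longrightarrow> grid_pos L j y \<le> grid_pos L j y')" for j
    using ex_has_least_nat[of "\<lambda>y. y \<in> set \<theta>" "hd \<theta>" "grid_pos L j"] path by (simp add: is_path_def)
  then obtain low where low: "\<And>j. low j \<in> set \<theta>"
      "\<And>j y. y \<in> set \<theta> \<Longrightarrow> grid_pos L j (low j) \<le> grid_pos L j y"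
    by metis
  have sheet: "snd (y ! k) = snd (hd \<theta> ! k)"
    if "y \<in> set \<theta>" "k < m" "k \<notin> (\<lambda>\<tau>. carry_level L \<tau> (low \<tau>)) ` {..<d}" for y k
    by (rule intersection_path_sheet_eq[where low = low, OF \<theta> low(1) _ that]) (rule low(2))
  define code where "code y = (map (\<lambda>j. grid_pos L j y - grid_pos L j (low j)) [0..<d],
      map (\<lambda>\<tau>. y ! carry_level L \<tau> (low \<tau>)) [0..<d])" for y
  define codes where "codes = {bs. set bs \<subseteq> {..1::nat} \<and> length bs = d} \<times> {cs. set cs \<subseteq> syms R \<and> length cs = d}"
  have "inj_on code (set \<theta>)"
  proof (rule inj_onI)
    fix y y' assume y: "y \<in> set \<theta>" and y': "y' \<in> set \<theta>" and "code y = code y'"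
    then have pos: "grid_pos L j y - grid_pos L j (low j) = grid_pos L j y' - grid_pos L j (low j)"
      and at_carry: "y ! carry_level L j (low j) = y' ! carry_level L j (low j)" if "j < d" for j
      using that by (simp_all add: code_def map_eq_conv)
    show "y = y'"
    proof (rule words_eqI[OF words[OF y] words[OF y']])
      show "grid_pos L j y = grid_pos L j y'" if "j < d" for j
        using pos[OF that] low(2)[OF y, of j] low(2)[OF y', of j] by simp
      show "snd (y ! k) = snd (y' ! k)" if "k < m" for k
        using at_carry sheet[OF y that] sheet[OF y' that]
        by (cases "k \<in> (\<lambda>\<tau>. carry_level L \<tau> (low \<tau>)) ` {..<d}") auto
    qed
  qed
  moreover have "code ` set \<theta> \<subseteq> codes"
  proof (rule image_subsetI)
    fix y assume y: "y \<in> set \<theta>"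
    have "grid_pos L j y - grid_pos L j (low j) \<le> 1" if "j < d" for j
      using intersection_path_grid_pos_window[OF \<theta> that y low(1)[of j]] low(2)[OF y, of j] by auto
    moreover have "y ! carry_level L \<tau> (low \<tau>) \<in> syms R" for \<tau>
    proof -
      have "low \<tau> \<noteq> []" "length (low \<tau>) = m"
        using words[OF low(1)[of \<tau>]] \<open>m \<noteq> 0\<close> by (auto simp: words_def)
      then have "carry_level L \<tau> (low \<tau>) < m" using carry_level_less by metis
      then show ?thesis using words[OF y] by (auto simp: words_def)
    qed
    ultimately show "code y \<in> codes"
      by (auto simp: code_def codes_def)
  qed
  moreover have "finite codes"
    using finite_syms by (simp add: codes_def finite_lists_length_eq)
  ultimately have "card (set \<theta>) \<le> card codes"
    by (rule card_inj_on_le)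
  also have "\<dots> = 2 ^ d * card (syms R) ^ d"
    using finite_syms by (simp add: codes_def card_cartesian_product card_lists_length_eq numeral_2_eq_2)
  finally show ?thesis .
qed

lemma nbhd_gdiam_le:
  "gdiam (words R (length w)) (redges R (length w)) (nbhd R w) \<le> enat (2 * (2 ^ d * card (syms R) ^ d))"
proof (rule gdiam_le_if_short_paths_from)
  fix v assume "v \<in> nbhd R w"
  then obtain \<theta> where "intersection_path R (length w) \<theta>" "hd \<theta> = w" "last \<theta> = v"
    by (auto simp: nbhd_def)
  then show "\<exists>p. is_path (words R (length w)) (redges R (length w)) p \<and> hd p = w \<and> last p = v \<and>
      card (set p) \<le> 2 ^ d * card (syms R) ^ d"
    using intersection_path_is_path intersection_path_card_le by blast
qed

end

theorem proposition5p7: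
  fixes R :: "(csym, nat) igs" and d L s :: nat
  assumes "cubical_igs d L s R"
  shows "bounded_geometry R"
proof -
  interpret cubical d L s R by unfold_locales (fact assms)
  have "(SUP w \<in> all_words R. gdiam (words R (length w)) (redges R (length w)) (nbhd R w))
      \<le> enat (2 * (2 ^ d * card (syms R) ^ d))"
    by (rule SUP_least) (rule nbhd_gdiam_le)
  then show ?thesis unfolding bounded_geometry_def by (rule le_less_trans) simp
qed

end
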